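(* Let $G=\mathrm{Cay}(\Gamma,S)$ be a Cayley graph, let $h\in S$ be an involution such that $H:=\langle h\rangle$ is normal in $\Gamma$, and let $r\ge2$. If $\{\mathbb{I},h\}$ is an $(r+2)$-local $2$-separator of $G$, then the vertex $\{\mathbb{I},h\}$ is an $r$-local cutvertex of $G/h$.
   Context: Generating sets exclude the identity $\mathbb{I}$ and are closed under inverses; $\mathrm{Cay}(\Gamma,S)$ is the simple graph on $\Gamma$ with edges $\{g,gs\}$. $G/h$ is the simple graph obtained from $G$ by contracting all edges labelled $h$ (i.e. the edges $\{g,gh\}$) and identifying parallel edges: its vertices are the cosets $gH=\{g,gh\}$, and two distinct cosets are adjacent iff some element of one is adjacent in $G$ to some element of the other. Ball $B_r(v)$: subgraph of all vertices and edges on closed walks of length $\le r$ through $v$; $v$ is an $r$-local cutvertex if $B_r(v)-v$ is disconnected. For $X=\{v_0,v_1\}$, $N(X)$ is the set of vertices outside $X$ adjacent to $X$; the connectivity graph $C_r(v_0,v_1)$ has vertex set $N(X)$, $a,b$ adjacent if for some $i$ they lie in the same component of $B_r(v_i)-v_0-v_1$; $X$ is an $r$-local $2$-separator if $C_r(v_0,v_1)$ is disconnected and $d_G(v_0,v_1)\le r/2$. *)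

theory Defs
  imports "HOL-Algebra.Coset" "HOL-Algebra.Generated_Groups"
begin

type_synonym 'v graph = "'v set \<times> 'v set set"

definition verts :: "'v graph \<Rightarrow> 'v set" where
  "verts G = fst G"

definition edges :: "'v graph \<Rightarrow> 'v set set" where
  "edges G = snd G"

definition adj :: "'v graph \<Rightarrow> 'v \<Rightarrow> 'v \<Rightarrow> bool" where
  "adj G a b \<longleftrightarrow> a \<in> verts G \<and> b \<in> verts G \<and> a \<noteq> b \<and> {a, b} \<in> edges G"

text \<open>A walk is a nonempty list of vertices, consecutive ones adjacent;
  its length is the number of edges, i.e. length p - 1.\<close>
definition walk :: "'v graph \<Rightarrow> 'v list \<Rightarrow> bool" where
  "walk G p \<longleftrightarrow> p \<noteq> [] \<and> set p \<subseteq> verts G \<and>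
     (\<forall>i. Suc i < length p \<longrightarrow> adj G (p ! i) (p ! Suc i))"

definition closed_walk_through :: "'v graph \<Rightarrow> nat \<Rightarrow> 'v \<Rightarrow> 'v list \<Rightarrow> bool" where
  "closed_walk_through G r v p \<longleftrightarrow>
     walk G p \<and> hd p = last p \<and> v \<in> set p \<and> length p - 1 \<le> r"

definition walk_edges :: "'v list \<Rightarrow> 'v set set" where
  "walk_edges p = {{p ! i, p ! Suc i} | i. Suc i < length p}"

definition ball :: "'v graph \<Rightarrow> nat \<Rightarrow> 'v \<Rightarrow> 'v graph" where
  "ball G r v =
     ({x. \<exists>p. closed_walk_through G r v p \<and> x \<in> set p},
      {e. \<exists>p. closed_walk_through G r v p \<and> e \<in> walk_edges p})"

definition delete_verts :: "'v graph \<Rightarrow> 'v set \<Rightarrow> 'v graph" where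
  "delete_verts G X = (verts G - X, {e \<in> edges G. (\<forall>x\<in>X. x \<notin> e)})"

definition same_component :: "'v graph \<Rightarrow> 'v \<Rightarrow> 'v \<Rightarrow> bool" where
  "same_component G a b \<longleftrightarrow> a \<in> verts G \<and> b \<in> verts G \<and> (adj G)\<^sup>*\<^sup>* a b"

definition disconnected :: "'v graph \<Rightarrow> bool" where
  "disconnected G \<longleftrightarrow> (\<exists>a\<in>verts G. \<exists>b\<in>verts G. \<not> same_component G a b)"

definition local_cutvertex :: "'v graph \<Rightarrow> nat \<Rightarrow> 'v \<Rightarrow> bool" where
  "local_cutvertex G r v \<longleftrightarrow> v \<in> verts G \<and> disconnected (delete_verts (ball G r v) {v})"

definition nbhd :: "'v graph \<Rightarrow> 'v set \<Rightarrow> 'v set" where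
  "nbhd G X = {u \<in> verts G - X. \<exists>x\<in>X. adj G x u}"

definition connectivity_graph :: "'v graph \<Rightarrow> nat \<Rightarrow> 'v \<Rightarrow> 'v \<Rightarrow> 'v graph" where
  "connectivity_graph G r v0 v1 =
     (nbhd G {v0, v1},
      {{a, b} | a b. a \<in> nbhd G {v0, v1} \<and> b \<in> nbhd G {v0, v1} \<and> a \<noteq> b \<and>
         (\<exists>v\<in>{v0, v1}. same_component (delete_verts (ball G r v) {v0, v1}) a b)})"

definition graph_dist_le :: "'v graph \<Rightarrow> 'v \<Rightarrow> 'v \<Rightarrow> nat \<Rightarrow> bool" where
  "graph_dist_le G a b k \<longleftrightarrow> (\<exists>p. walk G p \<and> hd p = a \<and> last p = b \<and> length p - 1 \<le> k)"

text \<open>{v0,v1} is an r-local 2-separator; d(v0,v1) \<le> r/2 is written 2 d \<le> r.\<close>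
definition local_2_separator :: "'v graph \<Rightarrow> nat \<Rightarrow> 'v \<Rightarrow> 'v \<Rightarrow> bool" where
  "local_2_separator G r v0 v1 \<longleftrightarrow>
     v0 \<in> verts G \<and> v1 \<in> verts G \<and> v0 \<noteq> v1 \<and>
     disconnected (connectivity_graph G r v0 v1) \<and>
     (\<exists>d. 2 * d \<le> r \<and> graph_dist_le G v0 v1 d)"

definition cayley_graph :: "('a, 'b) monoid_scheme \<Rightarrow> 'a set \<Rightarrow> 'a graph" where
  "cayley_graph \<Gamma> S =
     (carrier \<Gamma>, {{g, g \<otimes>\<^bsub>\<Gamma>\<^esub> s} | g s. g \<in> carrier \<Gamma> \<and> s \<in> S})"

definition is_generating_set :: "('a, 'b) monoid_scheme \<Rightarrow> 'a set \<Rightarrow> bool" where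
  "is_generating_set \<Gamma> S \<longleftrightarrow> S \<subseteq> carrier \<Gamma> \<and> generate \<Gamma> S = carrier \<Gamma> \<and>
     \<one>\<^bsub>\<Gamma>\<^esub> \<notin> S \<and> (\<forall>s\<in>S. inv\<^bsub>\<Gamma>\<^esub> s \<in> S)"

definition contract_h :: "('a, 'b) monoid_scheme \<Rightarrow> 'a set \<Rightarrow> 'a \<Rightarrow> 'a set graph" where
  "contract_h \<Gamma> S h =
     (let V = {{g, g \<otimes>\<^bsub>\<Gamma>\<^esub> h} | g. g \<in> carrier \<Gamma>} in
      (V, {{A, B} | A B. A \<in> V \<and> B \<in> V \<and> A \<noteq> B \<and>
            (\<exists>a\<in>A. \<exists>b\<in>B. adj (cayley_graph \<Gamma> S) a b)}))"

end

theory Submission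
  imports Defs
begin

text \<open>
  Normality of the order-two subgroup \<open>\<langle>h\<rangle> = {I, h}\<close> makes \<open>h\<close> central, so right
  multiplication by \<open>h\<close> is an automorphism of \<open>G = Cay(\<Gamma>, S)\<close> exchanging the ends of every
  \<open>h\<close>-edge. Suppose the punctured ball \<open>B\<^sub>r({I, h}) - {I, h}\<close> of \<open>G/h\<close> were connected. An
  edge of it lies on a closed walk of length \<open>\<le> r\<close> through \<open>{I, h}\<close>; lifting that walk to
  \<open>G\<close> from \<open>I\<close> and closing it with at most two \<open>h\<close>-steps gives a closed walk of length
  \<open>\<le> r + 2\<close> through both \<open>I\<close> and \<open>h\<close>, and so does its \<open>h\<close>-translate. Hence every path
  in the punctured ball of \<open>G/h\<close> lifts to \<open>B\<^sub>r\<^sub>+\<^sub>2(I) - {I, h}\<close>, and any two neighbours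
  \<open>a, b\<close> of \<open>{I, h}\<close> are joined there (each is adjacent to \<open>ah\<close> resp. \<open>bh\<close> through the
  4-cycle \<open>x, a, ah, xh\<close> with \<open>x \<in> {I, h}\<close>). So \<open>C\<^sub>r\<^sub>+\<^sub>2(I, h)\<close> would be connected.
\<close>

lemma adj_sym: "adj G a b \<Longrightarrow> adj G b a"
  unfolding adj_def by (auto simp: insert_commute)

lemma adj_verts: "adj G a b \<Longrightarrow> a \<in> verts G \<and> b \<in> verts G"
  by (simp add: adj_def)

lemma walk_Nil [simp]: "\<not> walk G []"
  by (simp add: walk_def)

lemma walk_single [simp]: "walk G [x] \<longleftrightarrow> x \<in> verts G"
  by (simp add: walk_def)

lemma walk_Cons_Cons [simp]: "walk G (x # y # xs) \<longleftrightarrow> adj G x y \<and> walk G (y # xs)"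
proof -
  have "(\<forall>i. Suc i < length (x # y # xs) \<longrightarrow> P i) \<longleftrightarrow>
      P 0 \<and> (\<forall>i. Suc i < length (y # xs) \<longrightarrow> P (Suc i))" for P
    by (auto simp: less_Suc_eq_0_disj)
  then show ?thesis
    by (auto simp: walk_def adj_def)
qed

lemma walk_Cons: "xs \<noteq> [] \<Longrightarrow> walk G (x # xs) \<longleftrightarrow> adj G x (hd xs) \<and> walk G xs"
  by (cases xs) auto

lemma walk_verts: "walk G p \<Longrightarrow> set p \<subseteq> verts G"
  by (simp add: walk_def)

lemma walk_append:
  "xs \<noteq> [] \<Longrightarrow> ys \<noteq> [] \<Longrightarrow>
     walk G (xs @ ys) \<longleftrightarrow> walk G xs \<and> adj G (last xs) (hd ys) \<and> walk G ys"
  by (induction xs rule: induct_list012) (auto simp: walk_Cons dest: adj_verts)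

lemma walk_glue:
  assumes "last xs = hd ys" "xs \<noteq> []" "ys \<noteq> []"
  shows "walk G (xs @ tl ys) \<longleftrightarrow> walk G xs \<and> walk G ys"
proof (cases "tl ys = []")
  case True
  then have "ys = [last xs]" using assms by (cases ys) auto
  then show ?thesis using walk_verts[of G xs] assms(2) by (auto dest: last_in_set)
next
  case False
  then show ?thesis using assms walk_Cons[of "tl ys" G "hd ys"]
    by (simp add: walk_append)
qed

lemma walk_map:
  assumes "walk G p" "\<And>x. x \<in> verts G \<Longrightarrow> f x \<in> verts G'"
    "\<And>a b. adj G a b \<Longrightarrow> adj G' (f a) (f b)"
  shows "walk G' (map f p)"
  using assms unfolding walk_def by auto

lemma walk_edges_Nil [simp]: "walk_edges [] = {}"
  and walk_edges_single [simp]: "walk_edges [x] = {}"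
  by (simp_all add: walk_edges_def)

lemma walk_edges_Cons_Cons [simp]:
  "walk_edges (x # y # xs) = insert {x, y} (walk_edges (y # xs))"
proof -
  have "{f i |i. Suc i < length (x # y # xs)} = insert (f 0) {f (Suc i) |i. Suc i < length (y # xs)}"
    for f :: "nat \<Rightarrow> 'a set"
    by (auto simp: less_Suc_eq_0_disj)
  then show ?thesis
    unfolding walk_edges_def by simp
qed

lemma walk_edges_glue:
  "last xs = hd ys \<Longrightarrow> xs \<noteq> [] \<Longrightarrow> ys \<noteq> [] \<Longrightarrow>
     walk_edges (xs @ tl ys) = walk_edges xs \<union> walk_edges ys"
  by (induction xs rule: induct_list012) (auto simp: neq_Nil_conv)

lemma walk_edges_map: "walk_edges (map f p) = image f ` walk_edges p"
  by (induction p rule: induct_list012) auto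

lemma walk_edges_append_subset: "walk_edges xs \<subseteq> walk_edges (xs @ ys)"
  by (induction xs rule: induct_list012) (auto simp: neq_Nil_conv)

lemma walk_edges_subset_set: "e \<in> walk_edges p \<Longrightarrow> e \<subseteq> set p"
  by (induction p rule: induct_list012) auto

lemma walk_edges_list_all2:
  "list_all2 R p P \<Longrightarrow> {A, B} \<in> walk_edges P \<Longrightarrow>
     \<exists>u w. R u A \<and> R w B \<and> {u, w} \<in> walk_edges p"
proof (induction P arbitrary: p rule: induct_list012)
  case (3 X Y Ps)
  then obtain x y ps where p: "p = x # y # ps" "R x X" "R y Y" "list_all2 R (y # ps) (Y # Ps)"
    by (auto simp: list_all2_Cons2)
  show ?case
  proof (cases "{A, B} = {X, Y}")
    case True
    then show ?thesis using p by (auto simp: doubleton_eq_iff insert_commute)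
  next
    case False
    then show ?thesis using 3 p by fastforce
  qed
qed auto

lemma list_all2_last: "list_all2 R xs ys \<Longrightarrow> ys \<noteq> [] \<Longrightarrow> R (last xs) (last ys)"
  by (induction rule: list_all2_induct) auto

lemma closed_walk_through_rotate:
  assumes "closed_walk_through G r v p"
  obtains q where "closed_walk_through G r v q" "hd q = v" "walk_edges p \<subseteq> walk_edges q"
proof -
  have p: "walk G p" "hd p = last p" "v \<in> set p" "length p - 1 \<le> r"
    using assms by (auto simp: closed_walk_through_def)
  obtain xs ys where split: "p = (xs @ [v]) @ tl (v # ys)"
    using split_list[OF p(3)] by auto
  define q where "q = (v # ys) @ tl (xs @ [v])"
  have glue: "last (v # ys) = hd (xs @ [v])"
    using p(2) split by (cases xs) auto
  have "walk G q \<longleftrightarrow> walk G (v # ys) \<and> walk G (xs @ [v])"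
    unfolding q_def by (rule walk_glue[OF glue]) simp_all
  moreover have "walk_edges q = walk_edges (v # ys) \<union> walk_edges (xs @ [v])"
    unfolding q_def by (rule walk_edges_glue[OF glue]) simp_all
  moreover have "walk G p \<longleftrightarrow> walk G (xs @ [v]) \<and> walk G (v # ys)"
    unfolding split by (rule walk_glue) simp_all
  moreover have "walk_edges p = walk_edges (xs @ [v]) \<union> walk_edges (v # ys)"
    unfolding split by (rule walk_edges_glue) simp_all
  ultimately have "walk G q" "walk_edges q = walk_edges p"
    using p(1) by auto
  moreover have "length q = length p" "last q = v"
    unfolding q_def split using glue by (cases xs; simp)+
  ultimately have "closed_walk_through G r v q"
    using p glue by (auto simp: closed_walk_through_def q_def)
  then show thesis
    using that \<open>walk_edges q = walk_edges p\<close> by (simp add: q_def)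
qed

lemma verts_delete_verts [simp]: "verts (delete_verts G Y) = verts G - Y"
  and edges_delete_verts [simp]: "edges (delete_verts G Y) = {e \<in> edges G. \<forall>y\<in>Y. y \<notin> e}"
  by (simp_all add: verts_def edges_def delete_verts_def)

lemma verts_ball: "verts (ball G r v) = {x. \<exists>p. closed_walk_through G r v p \<and> x \<in> set p}"
  and edges_ball: "edges (ball G r v) = {e. \<exists>p. closed_walk_through G r v p \<and> e \<in> walk_edges p}"
  by (simp_all add: verts_def edges_def ball_def)

lemma verts_ball_subset: "verts (ball G r v) \<subseteq> verts G"
  unfolding verts_ball closed_walk_through_def using walk_verts by fastforce

lemma adj_delete_ball_iff:
  "adj (delete_verts (ball G r v) Y) a b \<longleftrightarrow>
     a \<noteq> b \<and> a \<notin> Y \<and> b \<notin> Y \<and> {a, b} \<in> edges (ball G r v)"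
  unfolding adj_def verts_delete_verts edges_delete_verts verts_ball edges_ball
  by (blast dest: walk_edges_subset_set)

lemma verts_connectivity_graph: "verts (connectivity_graph G r v0 v1) = nbhd G {v0, v1}"
  by (simp add: verts_def connectivity_graph_def)

lemma same_component_connectivity_graphI:
  assumes "a \<in> nbhd G {v0, v1}" "b \<in> nbhd G {v0, v1}"
    and "same_component (delete_verts (ball G r v0) {v0, v1}) a b"
  shows "same_component (connectivity_graph G r v0 v1) a b"
proof (cases "a = b")
  case False
  with assms have "adj (connectivity_graph G r v0 v1) a b"
    by (auto simp: adj_def verts_def edges_def connectivity_graph_def)
  with assms show ?thesis
    by (auto simp: same_component_def verts_def connectivity_graph_def)
qed (use assms in \<open>simp add: same_component_def verts_def connectivity_graph_def\<close>)

lemma rtranclp_lift: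
  assumes "R\<^sup>*\<^sup>* A B" "a \<in> A"
    and lift: "\<And>A B x. R A B \<Longrightarrow> x \<in> A \<Longrightarrow> \<exists>y\<in>B. S x y"
  shows "\<exists>b\<in>B. S\<^sup>*\<^sup>* a b"
  using assms(1)
proof (induction rule: rtranclp_induct)
  case (step B C)
  then show ?case
    using lift by (meson rtranclp.rtrancl_into_rtrancl)
qed (use assms(2) in blast)

lemma (in group) central_if_normal_generate_involution:
  assumes h: "h \<in> carrier G" "h \<otimes> h = \<one>" and normal: "generate G {h} \<lhd> G"
    and g: "g \<in> carrier G"
  shows "g \<otimes> h = h \<otimes> g"
proof -
  have "inv h = h"
    using inv_equality[OF h(2) h(1) h(1)] .
  have generate_h: "x \<in> {\<one>, h}" if "x \<in> generate G {h}" for x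
    using that h \<open>inv h = h\<close> by (induction rule: generate.induct) auto
  have "g \<otimes> h \<otimes> inv g \<in> generate G {h}"
    using normal.inv_op_closed2[OF normal g] generate.incl[of h "{h}" G] by simp
  moreover have conj: "g \<otimes> h = g \<otimes> h \<otimes> inv g \<otimes> g"
    using g h by (simp add: m_assoc)
  ultimately consider "g \<otimes> h \<otimes> inv g = h" | "g \<otimes> h \<otimes> inv g = \<one>"
    using generate_h by blast
  then show ?thesis
  proof cases
    case 2
    then have "h = \<one>"
      using conj g h by simp
    then show ?thesis
      using g by simp
  qed (use conj in simp)
qed

locale cayley = group \<Gamma> for \<Gamma> :: "('a, 'b) monoid_scheme" (structure) +
  fixes S :: "'a set"
  assumes S_subset: "S \<subseteq> carrier \<Gamma>"
    and S_inv_closed: "s \<in> S \<Longrightarrow> inv s \<in> S"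
begin

abbreviation "Cay \<equiv> cayley_graph \<Gamma> S"

lemma verts_cayley [simp]: "verts Cay = carrier \<Gamma>"
  by (simp add: verts_def cayley_graph_def)

lemma adj_cayley_iff:
  "adj Cay a b \<longleftrightarrow> a \<in> carrier \<Gamma> \<and> b \<in> carrier \<Gamma> \<and> a \<noteq> b \<and> (\<exists>s\<in>S. b = a \<otimes> s)"
proof
  assume ab: "adj Cay a b"
  then obtain g s where gs: "{a, b} = {g, g \<otimes> s}" "g \<in> carrier \<Gamma>" "s \<in> S"
    by (auto simp: adj_def edges_def cayley_graph_def)
  have "s \<in> carrier \<Gamma>"
    using gs S_subset by auto
  then have "a = g \<otimes> s \<Longrightarrow> g = a \<otimes> inv s"
    using gs(2) by (simp add: m_assoc)
  then show "a \<in> carrier \<Gamma> \<and> b \<in> carrier \<Gamma> \<and> a \<noteq> b \<and> (\<exists>s\<in>S. b = a \<otimes> s)"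
    using ab gs S_inv_closed by (auto simp: adj_def doubleton_eq_iff)
qed (auto simp: adj_def verts_def edges_def cayley_graph_def)

lemma adj_cayley_mult_central:
  assumes c: "c \<in> carrier \<Gamma>" "\<And>g. g \<in> carrier \<Gamma> \<Longrightarrow> g \<otimes> c = c \<otimes> g"
    and ab: "adj Cay a b"
  shows "adj Cay (a \<otimes> c) (b \<otimes> c)"
proof -
  obtain s where s: "a \<in> carrier \<Gamma>" "b \<in> carrier \<Gamma>" "a \<noteq> b" "s \<in> S" "b = a \<otimes> s"
    using ab by (auto simp: adj_cayley_iff)
  have sc: "s \<in> carrier \<Gamma>"
    using s S_subset by auto
  then have "b \<otimes> c = a \<otimes> c \<otimes> s"
    using s c c(2)[of s] by (simp add: m_assoc)
  moreover have "a \<otimes> c \<noteq> b \<otimes> c"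
    using s c by simp
  ultimately show ?thesis
    using s sc c(1) by (auto simp: adj_cayley_iff)
qed

lemma walk_cayley_mult_central:
  assumes "c \<in> carrier \<Gamma>" "\<And>g. g \<in> carrier \<Gamma> \<Longrightarrow> g \<otimes> c = c \<otimes> g" "walk Cay p"
  shows "walk Cay (map (\<lambda>x. x \<otimes> c) p)"
  by (rule walk_map[OF assms(3)]) (use assms(1) adj_cayley_mult_central[OF assms(1,2)] in auto)

end

locale cayley_central_involution = cayley +
  fixes h :: 'a
  assumes h_in_S: "h \<in> S" and h_ne_one: "h \<noteq> \<one>" and h_involution: "h \<otimes> h = \<one>"
    and h_central: "g \<in> carrier \<Gamma> \<Longrightarrow> g \<otimes> h = h \<otimes> g"
begin

abbreviation "Quot \<equiv> contract_h \<Gamma> S h"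
abbreviation "H \<equiv> {\<one>, h}"
abbreviation "Cay_punctured r \<equiv> delete_verts (ball Cay (r + 2) \<one>) H"
abbreviation "Quot_punctured r \<equiv> delete_verts (ball Quot r H) {H}"

lemma h_carrier: "h \<in> carrier \<Gamma>"
  using h_in_S S_subset by auto

lemma mult_h_h [simp]: "g \<in> carrier \<Gamma> \<Longrightarrow> g \<otimes> h \<otimes> h = g"
  using h_carrier by (simp add: m_assoc h_involution)

lemma adj_cayley_mult_h: "g \<in> carrier \<Gamma> \<Longrightarrow> adj Cay g (g \<otimes> h)"
  using h_carrier h_ne_one h_in_S by (auto simp: adj_cayley_iff)

lemma verts_quot: "verts Quot = {{g, g \<otimes> h} | g. g \<in> carrier \<Gamma>}"
  by (simp add: verts_def contract_h_def Let_def)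

lemma adj_quot_iff:
  "adj Quot A B \<longleftrightarrow>
     A \<in> verts Quot \<and> B \<in> verts Quot \<and> A \<noteq> B \<and> (\<exists>a\<in>A. \<exists>b\<in>B. adj Cay a b)"
proof -
  have "edges Quot = {{A, B} | A B. A \<in> verts Quot \<and> B \<in> verts Quot \<and> A \<noteq> B \<and>
      (\<exists>a\<in>A. \<exists>b\<in>B. adj Cay a b)}"
    unfolding verts_quot by (simp add: edges_def contract_h_def Let_def)
  moreover have "(\<exists>a\<in>A. \<exists>b\<in>B. adj Cay a b) \<longleftrightarrow> (\<exists>b\<in>B. \<exists>a\<in>A. adj Cay b a)"
    by (blast intro: adj_sym)
  ultimately show ?thesis
    unfolding adj_def[of Quot] by (auto simp: doubleton_eq_iff)
qed

lemma quot_vert_eq: "A \<in> verts Quot \<Longrightarrow> a \<in> A \<Longrightarrow> a \<in> carrier \<Gamma> \<and> A = {a, a \<otimes> h}"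
  using h_carrier by (auto simp: verts_quot)

lemma H_in_verts_quot: "H \<in> verts Quot"
  using h_carrier by (force simp: verts_quot)

lemma quot_vert_disjoint_H: "A \<in> verts Quot \<Longrightarrow> A \<noteq> H \<Longrightarrow> a \<in> A \<Longrightarrow> a \<notin> H"
  using quot_vert_eq h_involution h_carrier by fastforce

lemma adj_quot_lift:
  assumes AB: "adj Quot A B" and x: "x \<in> A"
  shows "\<exists>y\<in>B. adj Cay x y"
proof -
  obtain a b where ab: "a \<in> A" "b \<in> B" "adj Cay a b" "A \<in> verts Quot" "B \<in> verts Quot"
    using AB by (auto simp: adj_quot_iff)
  then have "x = a \<or> x = a \<otimes> h" "b \<otimes> h \<in> B"
    using x quot_vert_eq by blast+
  then show ?thesis
    using ab adj_cayley_mult_central[OF h_carrier h_central ab(3)] by auto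
qed

lemma walk_quot_lift:
  "walk Quot P \<Longrightarrow> x \<in> hd P \<Longrightarrow> \<exists>p. walk Cay p \<and> hd p = x \<and> list_all2 (\<in>) p P"
proof (induction P arbitrary: x rule: induct_list012)
  case (2 A)
  then show ?case
    using quot_vert_eq[of A x] by (intro exI[of _ "[x]"]) auto
next
  case (3 A B Ps)
  then have AB: "adj Quot A B" and "walk Quot (B # Ps)" "x \<in> A"
    by simp_all
  then obtain y where y: "y \<in> B" "adj Cay x y"
    using adj_quot_lift[OF AB] by blast
  with 3 obtain p where p: "walk Cay p" "hd p = y" "list_all2 (\<in>) p (B # Ps)"
    by auto
  then have "p \<noteq> []"
    by auto
  then show ?case
    using p y 3 by (intro exI[of _ "x # p"]) (auto simp: walk_Cons)
qed simp

lemma closed_walk_quot_lift: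
  assumes P: "closed_walk_through Quot r H P" "hd P = H" and AB: "{A, B} \<in> walk_edges P"
  shows "\<exists>W. closed_walk_through Cay (r + 2) \<one> W \<and> h \<in> set W \<and>
    (\<exists>u\<in>A. \<exists>w\<in>B. {u, w} \<in> walk_edges W)"
proof -
  have "walk Quot P" "last P = H" "length P - 1 \<le> r"
    using P by (auto simp: closed_walk_through_def)
  moreover have "\<one> \<in> hd P"
    using P(2) by simp
  ultimately obtain p where p: "walk Cay p" "hd p = \<one>" "list_all2 (\<in>) p P"
    using walk_quot_lift by blast
  have "p \<noteq> []" "length p = length P"
    using p by (auto simp: list_all2_lengthD)
  obtain u w where uw: "u \<in> A" "w \<in> B" "{u, w} \<in> walk_edges p"
    using walk_edges_list_all2[OF p(3) AB] by auto
  have "last p \<in> last P"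
    using list_all2_last[OF p(3)] \<open>walk Quot P\<close> by (metis walk_Nil)
  then have last_p: "last p \<in> H"
    using \<open>last P = H\<close> by simp
  \<comment> \<open>Closing up through \<open>h\<close> also puts \<open>h\<close> on \<open>W\<close>, so that its \<open>h\<close>-translate passes through \<open>\<one>\<close>.\<close>
  define W where "W = p @ (if last p = h then [\<one>] else [h, \<one>])"
  have one_h: "adj Cay \<one> h"
    using adj_cayley_mult_h[of \<one>] h_carrier by simp
  note h_one = adj_sym[OF one_h]
  have "walk Cay W \<and> h \<in> set W"
  proof (cases "last p = h")
    case True
    then show ?thesis
      using p(1) h_one \<open>p \<noteq> []\<close> last_in_set[of p] by (simp add: W_def walk_append)
  next
    case False
    then have "last p = \<one>"
      using last_p by simp
    then show ?thesis
      using False p(1) one_h h_one \<open>p \<noteq> []\<close> by (simp add: W_def walk_append)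
  qed
  moreover have "hd W = \<one>" "last W = \<one>" "\<one> \<in> set W" "length W \<le> length p + 2"
    using p(2) \<open>p \<noteq> []\<close> by (simp_all add: W_def)
  moreover have "{u, w} \<in> walk_edges W"
    using uw(3) walk_edges_append_subset unfolding W_def by blast
  ultimately show ?thesis
    using uw \<open>length p = length P\<close> \<open>length P - 1 \<le> r\<close>
    by (intro exI[of _ W]) (auto simp: closed_walk_through_def)
qed

lemma closed_walk_cayley_mult_h:
  assumes W: "closed_walk_through Cay k \<one> W" and "h \<in> set W"
  shows "closed_walk_through Cay k \<one> (map (\<lambda>x. x \<otimes> h) W)"
proof -
  have "walk Cay W" "W \<noteq> []" "hd W = last W" "length W - 1 \<le> k"
    using W by (auto simp: closed_walk_through_def)
  moreover have "\<one> \<in> set (map (\<lambda>x. x \<otimes> h) W)"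
    using \<open>h \<in> set W\<close> h_involution by force
  ultimately show ?thesis
    using walk_cayley_mult_central[OF h_carrier h_central]
    by (auto simp: closed_walk_through_def hd_map last_map)
qed

lemma ball_quot_edge_lift:
  assumes "{A, B} \<in> edges (ball Quot r H)"
  shows "\<exists>u\<in>A. \<exists>w\<in>B. {u, w} \<in> edges (ball Cay (r + 2) \<one>) \<and>
    {u \<otimes> h, w \<otimes> h} \<in> edges (ball Cay (r + 2) \<one>)"
proof -
  obtain P where P: "closed_walk_through Quot r H P" "{A, B} \<in> walk_edges P"
    using assms by (auto simp: edges_ball)
  obtain P' where "closed_walk_through Quot r H P'" "hd P' = H" "walk_edges P \<subseteq> walk_edges P'"
    by (rule closed_walk_through_rotate[OF P(1)])
  then obtain W u w where W: "closed_walk_through Cay (r + 2) \<one> W" "h \<in> set W"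
    and uw: "u \<in> A" "w \<in> B" "{u, w} \<in> walk_edges W"
    using closed_walk_quot_lift P(2) by blast
  have "(\<lambda>x. x \<otimes> h) ` {u, w} \<in> walk_edges (map (\<lambda>x. x \<otimes> h) W)"
    unfolding walk_edges_map using uw(3) by (rule imageI)
  then have "{u \<otimes> h, w \<otimes> h} \<in> edges (ball Cay (r + 2) \<one>)"
    unfolding edges_ball using closed_walk_cayley_mult_h[OF W] by auto
  moreover have "{u, w} \<in> edges (ball Cay (r + 2) \<one>)"
    unfolding edges_ball using W(1) uw(3) by blast
  ultimately show ?thesis
    using uw(1,2) by blast
qed

lemma adj_punctured_lift:
  assumes AB: "adj (Quot_punctured r) A B" and x: "x \<in> A"
  shows "\<exists>y\<in>B. adj (Cay_punctured r) x y"
proof -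
  have "A \<noteq> B" "A \<noteq> H" "B \<noteq> H" and edge: "{A, B} \<in> edges (ball Quot r H)"
    using AB by (auto simp: adj_delete_ball_iff)
  have "A \<in> verts (ball Quot r H)" "B \<in> verts (ball Quot r H)"
    using adj_verts[OF AB] by simp_all
  then have "A \<in> verts Quot" "B \<in> verts Quot"
    using verts_ball_subset[of Quot r H] by blast+
  obtain u w where uw: "u \<in> A" "w \<in> B" "{u, w} \<in> edges (ball Cay (r + 2) \<one>)"
    "{u \<otimes> h, w \<otimes> h} \<in> edges (ball Cay (r + 2) \<one>)"
    using ball_quot_edge_lift[OF edge] by blast
  have u: "u \<in> carrier \<Gamma>" "A = {u, u \<otimes> h}" and w: "w \<in> carrier \<Gamma>" "B = {w, w \<otimes> h}"
    using quot_vert_eq \<open>A \<in> verts Quot\<close> \<open>B \<in> verts Quot\<close> uw(1,2) by blast+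
  then have "u \<noteq> w" "u \<otimes> h \<noteq> w \<otimes> h"
    using \<open>A \<noteq> B\<close> h_carrier by auto
  moreover have "u \<notin> H" "u \<otimes> h \<notin> H" "w \<notin> H" "w \<otimes> h \<notin> H"
    using quot_vert_disjoint_H[OF \<open>A \<in> verts Quot\<close> \<open>A \<noteq> H\<close>]
      quot_vert_disjoint_H[OF \<open>B \<in> verts Quot\<close> \<open>B \<noteq> H\<close>] u(2) w(2)
    by blast+
  ultimately have "adj (Cay_punctured r) u w" "adj (Cay_punctured r) (u \<otimes> h) (w \<otimes> h)"
    using uw(3,4) unfolding adj_delete_ball_iff by blast+
  then show ?thesis
    using x u(2) w(2) by blast
qed

lemma adj_punctured_nbhd:
  assumes "r \<ge> 2" and a: "a \<in> nbhd Cay H"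
  shows "adj (Cay_punctured r) a (a \<otimes> h)"
proof -
  obtain x where x: "x \<in> H" "adj Cay x a" and "a \<notin> H"
    using a by (auto simp: nbhd_def)
  have "x \<in> carrier \<Gamma>" "a \<in> carrier \<Gamma>"
    using x(2) by (auto simp: adj_cayley_iff)
  define W where "W = [x, a, a \<otimes> h, x \<otimes> h, x]"
  have "walk Cay W"
    using x(2) adj_cayley_mult_h adj_cayley_mult_central[OF h_carrier h_central adj_sym[OF x(2)]]
      adj_sym[OF adj_cayley_mult_h] \<open>x \<in> carrier \<Gamma>\<close> \<open>a \<in> carrier \<Gamma>\<close>
    by (simp add: W_def)
  moreover have "\<one> \<in> set W"
    using x(1) h_involution by (auto simp: W_def)
  ultimately have "closed_walk_through Cay (r + 2) \<one> W"
    using \<open>r \<ge> 2\<close> by (simp add: closed_walk_through_def W_def)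
  moreover have "{a, a \<otimes> h} \<in> walk_edges W"
    by (simp add: W_def)
  moreover have "a \<otimes> h \<notin> H"
  proof
    assume "a \<otimes> h \<in> H"
    then have "a \<otimes> h \<otimes> h \<in> {\<one> \<otimes> h, h \<otimes> h}"
      by auto
    then show False
      using \<open>a \<notin> H\<close> \<open>a \<in> carrier \<Gamma>\<close> h_carrier h_involution by auto
  qed
  ultimately show ?thesis
    using \<open>a \<notin> H\<close> \<open>a \<in> carrier \<Gamma>\<close> h_carrier h_ne_one
    by (auto simp: adj_delete_ball_iff edges_ball)
qed

lemma nbhd_coset_in_punctured:
  assumes "r \<ge> 2" and a: "a \<in> nbhd Cay H"
  shows "{a, a \<otimes> h} \<in> verts (Quot_punctured r)"
proof -
  obtain x where x: "x \<in> H" "adj Cay x a" and "a \<notin> H"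
    using a by (auto simp: nbhd_def)
  have "{a, a \<otimes> h} \<in> verts Quot" "{a, a \<otimes> h} \<noteq> H"
    using x(2) \<open>a \<notin> H\<close> by (auto simp: verts_quot adj_cayley_iff)
  then have "adj Quot H {a, a \<otimes> h}"
    using x H_in_verts_quot by (auto simp: adj_quot_iff)
  then have "closed_walk_through Quot r H [H, {a, a \<otimes> h}, H]"
    using \<open>r \<ge> 2\<close> adj_sym[of Quot] H_in_verts_quot by (simp add: closed_walk_through_def)
  then show ?thesis
    using \<open>{a, a \<otimes> h} \<noteq> H\<close> by (force simp: verts_ball)
qed

lemma same_component_punctured_nbhd:
  assumes "r \<ge> 2" and connected: "\<not> disconnected (Quot_punctured r)"
    and a: "a \<in> nbhd Cay H" and b: "b \<in> nbhd Cay H"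
  shows "same_component (Cay_punctured r) a b"
proof -
  have "same_component (Quot_punctured r) {a, a \<otimes> h} {b, b \<otimes> h}"
    using connected nbhd_coset_in_punctured[OF \<open>r \<ge> 2\<close> a] nbhd_coset_in_punctured[OF \<open>r \<ge> 2\<close> b]
    unfolding disconnected_def by blast
  then have "(adj (Quot_punctured r))\<^sup>*\<^sup>* {a, a \<otimes> h} {b, b \<otimes> h}"
    by (simp add: same_component_def)
  then have "\<exists>z\<in>{b, b \<otimes> h}. (adj (Cay_punctured r))\<^sup>*\<^sup>* a z"
    by (rule rtranclp_lift[OF _ _ adj_punctured_lift]) simp
  then obtain z where z: "z \<in> {b, b \<otimes> h}" "(adj (Cay_punctured r))\<^sup>*\<^sup>* a z"
    by blast
  moreover have a_adj: "adj (Cay_punctured r) a (a \<otimes> h)"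
    and b_adj: "adj (Cay_punctured r) b (b \<otimes> h)"
    using adj_punctured_nbhd[OF \<open>r \<ge> 2\<close>] a b by blast+
  ultimately have "(adj (Cay_punctured r))\<^sup>*\<^sup>* a b"
  proof (cases "z = b")
    case False
    with z have "(adj (Cay_punctured r))\<^sup>*\<^sup>* a (b \<otimes> h)"
      by simp
    then show ?thesis
      using adj_sym[OF b_adj] by (rule rtranclp.rtrancl_into_rtrancl)
  qed simp
  moreover have "a \<in> verts (Cay_punctured r)" "b \<in> verts (Cay_punctured r)"
    using adj_verts[OF a_adj] adj_verts[OF b_adj] by blast+
  ultimately show ?thesis
    by (simp add: same_component_def)
qed

theorem local_cutvertex_quot:
  assumes "r \<ge> 2" and separator: "local_2_separator Cay (r + 2) \<one> h"
  shows "local_cutvertex Quot r H"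
proof (rule ccontr)
  assume "\<not> local_cutvertex Quot r H"
  then have connected: "\<not> disconnected (Quot_punctured r)"
    using H_in_verts_quot by (simp add: local_cutvertex_def)
  have "same_component (connectivity_graph Cay (r + 2) \<one> h) a b"
    if "a \<in> nbhd Cay H" "b \<in> nbhd Cay H" for a b
    using that
    by (intro same_component_connectivity_graphI same_component_punctured_nbhd[OF \<open>r \<ge> 2\<close> connected])
  moreover have "disconnected (connectivity_graph Cay (r + 2) \<one> h)"
    using separator by (simp add: local_2_separator_def)
  ultimately show False
    unfolding disconnected_def verts_connectivity_graph by blast
qed

end

theorem lemma6p5:
  fixes \<Gamma> :: "('a, 'b) monoid_scheme" and S :: "'a set" and h :: 'a and r :: nat
  assumes "group \<Gamma>"
    and "is_generating_set \<Gamma> S"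
    and "h \<in> S"
    and "h \<otimes>\<^bsub>\<Gamma>\<^esub> h = \<one>\<^bsub>\<Gamma>\<^esub>"
    and "generate \<Gamma> {h} \<lhd> \<Gamma>"
    and "r \<ge> 2"
    and "local_2_separator (cayley_graph \<Gamma> S) (r + 2) \<one>\<^bsub>\<Gamma>\<^esub> h"
  shows "local_cutvertex (contract_h \<Gamma> S h) r {\<one>\<^bsub>\<Gamma>\<^esub>, h}"
proof -
  have S: "S \<subseteq> carrier \<Gamma>" "\<one>\<^bsub>\<Gamma>\<^esub> \<notin> S" "\<And>s. s \<in> S \<Longrightarrow> inv\<^bsub>\<Gamma>\<^esub> s \<in> S"
    using assms(2) by (auto simp: is_generating_set_def)
  then have h: "h \<in> carrier \<Gamma>" "h \<noteq> \<one>\<^bsub>\<Gamma>\<^esub>"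
    using assms(3) by auto
  have "cayley_central_involution \<Gamma> S h"
  proof (intro cayley_central_involution.intro cayley_central_involution_axioms.intro
      cayley.intro cayley_axioms.intro)
    show "g \<otimes>\<^bsub>\<Gamma>\<^esub> h = h \<otimes>\<^bsub>\<Gamma>\<^esub> g" if "g \<in> carrier \<Gamma>" for g
      using group.central_if_normal_generate_involution[OF assms(1) h(1) assms(4,5) that] .
  qed (use assms(1,3,4) S h in auto)
  then show ?thesis
    using assms(6,7) by (rule cayley_central_involution.local_cutvertex_quot)
qed

end
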